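(* For every sufficiently large prime $p$, there is a set $A\subset\{1,2,\dots,\lfloor p/2\rfloor-1\}$ such that (i) the sets $A$ and $A+A+\{0,1\}$ are disjoint, and (ii) $A+A+A$ contains $p+2$ consecutive integers.
   Context: For sets $X,Y\subset\mathbb Z$, $X+Y=\{x+y:x\in X,y\in Y\}$. *)

theory Defs
  imports Main "HOL-Computational_Algebra.Primes"
begin

definition sumset :: "int set \<Rightarrow> int set \<Rightarrow> int set" where
  "sumset X Y = {x + y | x y. x \<in> X \<and> y \<in> Y}"

end

theory Submission
  imports Defs
begin

text \<open>With \<open>l = \<lfloor>\<lfloor>p/2\<rfloor>/5\<rfloor>\<close>, take \<open>A\<close> to be the union of the five blocks
  \<open>{l}\<close>, \<open>[l+3, 2l-5]\<close>, \<open>{2l+2}\<close>, \<open>[4l, 4l+2]\<close>, \<open>[4l+6, 5l-1]\<close>, all below \<open>p/2\<close>.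
  The gaps are placed so that every sum of two elements of \<open>A\<close>, and that sum plus one,
  falls outside \<open>A\<close>. On the other hand the sums of three blocks are intervals that
  together cover \<open>[4l, 14l+11]\<close>, which has more than \<open>p + 1 \<le> 10l + 10\<close> elements.\<close>

definition five_blocks :: "int \<Rightarrow> int set" where
  "five_blocks l = {l} \<union> {l+3..2*l-5} \<union> {2*l+2} \<union> {4*l..4*l+2} \<union> {4*l+6..5*l-1}"

lemma sumset_mono: "X \<subseteq> X' \<Longrightarrow> Y \<subseteq> Y' \<Longrightarrow> sumset X Y \<subseteq> sumset X' Y'"
  unfolding sumset_def by blast

lemma sumset_atLeastAtMost:
  fixes a b c d :: int
  assumes "a \<le> b" "c \<le> d"
  shows "sumset {a..b} {c..d} = {a+c..b+d}"
proof
  show "sumset {a..b} {c..d} \<subseteq> {a+c..b+d}"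
    unfolding sumset_def by auto
  show "{a+c..b+d} \<subseteq> sumset {a..b} {c..d}"
  proof
    fix t assume "t \<in> {a+c..b+d}"
    then have "max a (t-d) \<in> {a..b}" "t - max a (t-d) \<in> {c..d}"
      using assms by auto
    moreover have "t = max a (t-d) + (t - max a (t-d))"
      by simp
    ultimately show "t \<in> sumset {a..b} {c..d}"
      unfolding sumset_def by blast
  qed
qed

lemma atLeastAtMost_sum3_subset:
  fixes A :: "int set"
  assumes "{a1..b1} \<subseteq> A" "{a2..b2} \<subseteq> A" "{a3..b3} \<subseteq> A"
    and "a1 \<le> b1" "a2 \<le> b2" "a3 \<le> b3"
  shows "{a1+a2+a3..b1+b2+b3} \<subseteq> sumset (sumset A A) A"
proof -
  have "{a1+a2+a3..b1+b2+b3} = sumset (sumset {a1..b1} {a2..b2}) {a3..b3}"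
    using assms(4-6) by (simp add: sumset_atLeastAtMost)
  also have "\<dots> \<subseteq> sumset (sumset A A) A"
    using assms(1-3) by (intro sumset_mono) auto
  finally show ?thesis .
qed

lemma five_blocks_subset: "five_blocks l \<subseteq> {l..5*l-1}" if "l \<ge> 3"
  using that unfolding five_blocks_def by auto

lemma five_blocks_sum2_notin:
  assumes "l \<ge> 30" "a \<in> five_blocks l" "b \<in> five_blocks l"
  shows "a + b \<notin> five_blocks l" "a + b + 1 \<notin> five_blocks l"
  using assms unfolding five_blocks_def by auto

lemma five_blocks_disjoint_sums:
  assumes "l \<ge> 30"
  shows "five_blocks l \<inter> sumset (sumset (five_blocks l) (five_blocks l)) {0, 1} = {}"
  using five_blocks_sum2_notin[OF assms] unfolding sumset_def by fastforce

lemma five_blocks_sum3_covers: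
  assumes "l \<ge> 30"
  shows "{4*l..14*l+11} \<subseteq> sumset (sumset (five_blocks l) (five_blocks l)) (five_blocks l)"
    (is "_ \<subseteq> ?S")
proof -
  have B: "{l..l} \<subseteq> five_blocks l" "{l+3..2*l-5} \<subseteq> five_blocks l"
    "{2*l+2..2*l+2} \<subseteq> five_blocks l" "{4*l..4*l+2} \<subseteq> five_blocks l"
    "{4*l+6..5*l-1} \<subseteq> five_blocks l"
    unfolding five_blocks_def by auto
  note sum3 = atLeastAtMost_sum3_subset[where A = "five_blocks l"]
  have "{4*l..14*l+11} \<subseteq>
      {3*l+9..6*l-15} \<union> {5*l+7..6*l-1} \<union> {6*l..6*l+2} \<union> {6*l+3..7*l-3} \<union>
      {6*l+12..9*l-11} \<union> {8*l+10..9*l+3} \<union> {9*l+3..10*l-1} \<union> {9*l+9..11*l-4} \<union>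
      {10*l+14..12*l} \<union> {12*l..12*l+6} \<union> {12*l+6..13*l+3} \<union> {12*l+18..15*l-3}"
    (is "_ \<subseteq> ?U")
    using assms by (intro subsetI) (simp, linarith)
  also have "?U \<subseteq> ?S"
  proof -
    have "{3*l+9..6*l-15} \<subseteq> ?S"
      by (rule order_trans[OF _ sum3[OF B(2) B(2) B(2)]]) (use assms in auto)
    moreover have "{5*l+7..6*l-1} \<subseteq> ?S"
      by (rule order_trans[OF _ sum3[OF B(2) B(3) B(3)]]) (use assms in auto)
    moreover have "{6*l..6*l+2} \<subseteq> ?S"
      by (rule order_trans[OF _ sum3[OF B(1) B(1) B(4)]]) (use assms in auto)
    moreover have "{6*l+3..7*l-3} \<subseteq> ?S"
      by (rule order_trans[OF _ sum3[OF B(1) B(2) B(4)]]) (use assms in auto)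
    moreover have "{6*l+12..9*l-11} \<subseteq> ?S"
      by (rule order_trans[OF _ sum3[OF B(2) B(2) B(5)]]) (use assms in auto)
    moreover have "{8*l+10..9*l+3} \<subseteq> ?S"
      by (rule order_trans[OF _ sum3[OF B(3) B(3) B(5)]]) (use assms in auto)
    moreover have "{9*l+3..10*l-1} \<subseteq> ?S"
      by (rule order_trans[OF _ sum3[OF B(2) B(4) B(4)]]) (use assms in auto)
    moreover have "{9*l+9..11*l-4} \<subseteq> ?S"
      by (rule order_trans[OF _ sum3[OF B(2) B(4) B(5)]]) (use assms in auto)
    moreover have "{10*l+14..12*l} \<subseteq> ?S"
      by (rule order_trans[OF _ sum3[OF B(3) B(5) B(5)]]) (use assms in auto)
    moreover have "{12*l..12*l+6} \<subseteq> ?S"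
      by (rule order_trans[OF _ sum3[OF B(4) B(4) B(4)]]) (use assms in auto)
    moreover have "{12*l+6..13*l+3} \<subseteq> ?S"
      by (rule order_trans[OF _ sum3[OF B(4) B(4) B(5)]]) (use assms in auto)
    moreover have "{12*l+18..15*l-3} \<subseteq> ?S"
      by (rule order_trans[OF _ sum3[OF B(5) B(5) B(5)]]) (use assms in auto)
    ultimately show ?thesis
      by (simp only: Un_subset_iff)
  qed
  finally show ?thesis .
qed

theorem lemma3p1:
  shows "\<exists>P::nat. \<forall>p::nat. prime p \<and> p \<ge> P \<longrightarrow>
    (\<exists>A::int set. A \<subseteq> {1 .. int (p div 2) - 1} \<and>
       A \<inter> sumset (sumset A A) {0, 1} = {} \<and>
       (\<exists>m::int. {m .. m + int p + 1} \<subseteq> sumset (sumset A A) A))"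
proof (intro exI[of _ 300] allI impI)
  fix p :: nat
  assume "prime p \<and> p \<ge> 300"
  define l where "l = int (p div 2 div 5)"
  have l: "l \<ge> 30" "5*l \<le> int (p div 2)" "int p \<le> 10*l + 9"
    using \<open>prime p \<and> p \<ge> 300\<close> unfolding l_def by linarith+
  show "\<exists>A. A \<subseteq> {1 .. int (p div 2) - 1} \<and> A \<inter> sumset (sumset A A) {0, 1} = {} \<and>
      (\<exists>m. {m .. m + int p + 1} \<subseteq> sumset (sumset A A) A)"
  proof (intro exI[of _ "five_blocks l"] exI[of _ "4*l"] conjI)
    show "five_blocks l \<subseteq> {1 .. int (p div 2) - 1}"
      using five_blocks_subset[of l] l by auto
    show "five_blocks l \<inter> sumset (sumset (five_blocks l) (five_blocks l)) {0, 1} = {}"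
      using five_blocks_disjoint_sums[OF l(1)] .
    show "{4*l .. 4*l + int p + 1} \<subseteq> sumset (sumset (five_blocks l) (five_blocks l)) (five_blocks l)"
      using five_blocks_sum3_covers[OF l(1)] l(3) by auto
  qed
qed

end
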